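(* Let $d\ge 2$ and let $\mathcal{S}^{(d)}_2$ be the complementary channel of the $1\to 2$ universal qudit cloner. Then the following operators form a set of rank-one Kraus operators for $\mathcal{S}^{(d)}_2$: $$\tfrac{1}{\sqrt{d+1}}|1\rangle\langle1|,\ \dots,\ \tfrac{1}{\sqrt{d+1}}|d\rangle\langle d|,\qquad \tfrac{1}{\sqrt{4^{d-1}(d+1)}}\,|\psi(\vec n)\rangle\langle\psi(\vec n)|\,\sigma_z(\vec n),$$ where $|\psi(\vec n)\rangle=\sum_{j=1}^d i^{n_j}|j\rangle$, $\sigma_z(\vec n)=\sum_{j=1}^d(-1)^{n_j}|j\rangle\langle j|$, and $\vec n=(n_1,\dots,n_d)$ ranges over all vectors with $n_1=0$ and $n_j\in\{0,1,2,3\}$ for $j\ge2$ (here $i=\sqrt{-1}$). That is, $\mathcal{S}^{(d)}_2(\rho)=\sum_m E_m\rho E_m^\dagger$ and $\sum_m E_m^\dagger E_m=I$ for this family $\{E_m\}$.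
   Context: The $1\to 2$ universal qudit cloner is the isometry $|l\rangle\otimes R\mapsto\sum_{j=1}^d\sqrt{\tfrac{1+\delta_{lj}}{d+1}}\,|\vec e_l+\vec e_j\rangle\otimes R_j$, where $|\vec m\rangle$ is the normalized completely symmetric two-qudit state with occupation vector $\vec m$ and $\{R_j\}_{j=1}^d$ are orthonormal auxiliary (environment) states. Its complementary channel $\mathcal{S}^{(d)}_2$ is obtained by applying the isometry and tracing out the two-qudit clone system; the environment is identified with $\mathbb{C}^d$ via $R_j\leftrightarrow|j\rangle$. With this identification $\mathcal{S}^{(d)}_2(\rho)=\frac{1}{d+1}\big(\mathrm{Tr}(\rho)I+\rho^{T}\big)$, the transpose taken in the basis $\{|j\rangle\}$. *)

theory Defs
  imports Complex_Main
begin

text \<open>Conventions: d x d complex matrices are functions nat => nat => complex,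
  indices range over {1..d}; entries outside this range are irrelevant.
  The two-qudit clone space has basis |a>|b> (a,b in {1..d}); the environment
  is identified with C^d via R_k <-> |k>.\<close>

definition mmult :: "nat \<Rightarrow> (nat \<Rightarrow> nat \<Rightarrow> complex) \<Rightarrow> (nat \<Rightarrow> nat \<Rightarrow> complex) \<Rightarrow> nat \<Rightarrow> nat \<Rightarrow> complex" where
  "mmult d A B i k = (\<Sum>j\<in>{1..d}. A i j * B j k)"

definition adj :: "(nat \<Rightarrow> nat \<Rightarrow> complex) \<Rightarrow> nat \<Rightarrow> nat \<Rightarrow> complex" where
  "adj A i j = cnj (A j i)"

definition idm :: "nat \<Rightarrow> nat \<Rightarrow> complex" where
  "idm i j = (if i = j then 1 else 0)"

text \<open>Component (a,b) of the normalized completely symmetric two-qudit state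
  with occupation vector e_l + e_j.\<close>
definition sym_state :: "nat \<Rightarrow> nat \<Rightarrow> nat \<Rightarrow> nat \<Rightarrow> complex" where
  "sym_state l j a b =
     (if l = j then (if a = l \<and> b = l then 1 else 0)
      else (if (a = l \<and> b = j) \<or> (a = j \<and> b = l) then complex_of_real (1 / sqrt 2) else 0))"

text \<open>Matrix of the 1->2 universal cloner isometry: row index (a,b,k) with (a,b) the
  clone system and k the environment label, column index l (input).\<close>
definition cloner_iso :: "nat \<Rightarrow> nat \<times> nat \<times> nat \<Rightarrow> nat \<Rightarrow> complex" where
  "cloner_iso d abk l = (case abk of (a, b, k) \<Rightarrow>
     complex_of_real (sqrt ((1 + (if l = k then 1 else 0)) / (real d + 1))) * sym_state l k a b)"

definition compl_S2 :: "nat \<Rightarrow> (nat \<Rightarrow> nat \<Rightarrow> complex) \<Rightarrow> nat \<Rightarrow> nat \<Rightarrow> complex" where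
  "compl_S2 d \<rho> k k' =
     (\<Sum>a\<in>{1..d}. \<Sum>b\<in>{1..d}. \<Sum>l\<in>{1..d}. \<Sum>l'\<in>{1..d}.
        cloner_iso d (a, b, k) l * \<rho> l l' * cnj (cloner_iso d (a, b, k') l'))"

definition kraus_diag :: "nat \<Rightarrow> nat \<Rightarrow> nat \<Rightarrow> nat \<Rightarrow> complex" where
  "kraus_diag d j a b = (if a = j \<and> b = j then complex_of_real (1 / sqrt (real d + 1)) else 0)"

definition psi :: "(nat \<Rightarrow> nat) \<Rightarrow> nat \<Rightarrow> complex" where
  "psi n j = \<i> ^ n j"

definition sigma_z :: "(nat \<Rightarrow> nat) \<Rightarrow> nat \<Rightarrow> nat \<Rightarrow> complex" where
  "sigma_z n a b = (if a = b then (-1) ^ n a else 0)"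

definition kraus_vec :: "nat \<Rightarrow> (nat \<Rightarrow> nat) \<Rightarrow> nat \<Rightarrow> nat \<Rightarrow> complex" where
  "kraus_vec d n =
     mmult d (\<lambda>a b. complex_of_real (1 / sqrt (4 ^ (d - 1) * (real d + 1))) * psi n a * cnj (psi n b))
             (sigma_z n)"

definition vec_set :: "nat \<Rightarrow> (nat \<Rightarrow> nat) set" where
  "vec_set d = {n. (\<forall>j. j \<notin> {2..d} \<longrightarrow> n j = 0) \<and> (\<forall>j. n j < 4)}"

end

theory Submission
  imports Defs
begin

text \<open>For a family of Kraus operators \<open>E\<close> put \<open>K k l k' j = (\<Sum>m. E m k l * cnj (E m k' j))\<close>.
  Then \<open>(\<Sum>m. E m \<rho> (E m)\<^sup>\<dagger>) k k' = (\<Sum>l j. \<rho> l j * K k l k' j)\<close>, and \<open>\<Sum>m. (E m)\<^sup>\<dagger> E m\<close> is also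
  read off \<open>K\<close>; so it suffices to show that the kernels of the diagonal and of the vector family
  add up to the kernel of the complementary channel. Orthonormality of the symmetric states gives
  the latter as \<open>[{l,k} = {j,k'}] (1 + [l = k]) / (d+1)\<close>, and completeness then just reflects
  that the cloner is an isometry. For the vector family the kernel is a character sum over
  \<open>(\<int>/4)\<^sup>d\<^sup>-\<^sup>1\<close>: \<open>\<Sum>n. i^(n k + n l - n k' - n j)\<close> is \<open>4\<^sup>d\<^sup>-\<^sup>1\<close> if \<open>{k,l} = {k',j}\<close> as multisets and
  vanishes otherwise. The diagonal family supplies the remaining \<open>[l = k]\<close> term.\<close>

definition digit_vecs :: "'a set \<Rightarrow> nat \<Rightarrow> ('a \<Rightarrow> nat) set" where
  "digit_vecs J q = {n. (\<forall>j. j \<notin> J \<longrightarrow> n j = 0) \<and> (\<forall>j. n j < q)}"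

lemma vec_set_eq_digit_vecs: "vec_set d = digit_vecs {2..d} 4"
  by (simp add: vec_set_def digit_vecs_def)

lemma digit_vecs_insert:
  assumes "x \<notin> J"
  shows "digit_vecs (insert x J) q = (\<lambda>(n, t). n(x := t)) ` (digit_vecs J q \<times> {..<q})"
proof
  show "digit_vecs (insert x J) q \<subseteq> (\<lambda>(n, t). n(x := t)) ` (digit_vecs J q \<times> {..<q})"
  proof
    fix n assume "n \<in> digit_vecs (insert x J) q"
    then have "(n(x := 0), n x) \<in> digit_vecs J q \<times> {..<q}"
      by (auto simp: digit_vecs_def)
    then show "n \<in> (\<lambda>(n, t). n(x := t)) ` (digit_vecs J q \<times> {..<q})"
      by (force intro: image_eqI[where x = "(n(x := 0), n x)"])
  qed
qed (use assms in \<open>auto simp: digit_vecs_def\<close>)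

lemma inj_on_digit_vecs_upd:
  assumes "x \<notin> J"
  shows "inj_on (\<lambda>(n, t). n(x := t)) (digit_vecs J q \<times> {..<q})"
proof (rule inj_onI, clarify)
  fix n t n' t'
  assume "n \<in> digit_vecs J q" "n' \<in> digit_vecs J q" and upd: "n(x := t) = n'(x := t')"
  then have "n x = 0" "n' x = 0" using assms by (auto simp: digit_vecs_def)
  then show "n = n' \<and> t = t'" using upd
    by (metis fun_upd_idem fun_upd_upd fun_upd_same)
qed

lemma sum_digit_vecs_prod:
  assumes "finite J" "0 < q"
  shows "(\<Sum>n\<in>digit_vecs J q. \<Prod>j\<in>J. f j (n j)) = (\<Prod>j\<in>J. \<Sum>t<q. f j t :: 'b :: comm_semiring_1)"
  using assms(1)
proof (induction J rule: finite_induct)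
  case empty
  have empty_vecs: "digit_vecs {} q = {\<lambda>_. 0}" using assms(2) by (auto simp: digit_vecs_def)
  show ?case unfolding empty_vecs by simp
next
  case (insert x J)
  have upd: "(\<Prod>j\<in>insert x J. f j ((n(x := t)) j)) = f x t * (\<Prod>j\<in>J. f j (n j))" for n t
    using insert.hyps by (simp, intro arg_cong[where f = "(*) _"] prod.cong) auto
  have "(\<Sum>n\<in>digit_vecs (insert x J) q. \<Prod>j\<in>insert x J. f j (n j))
      = (\<Sum>(n, t)\<in>digit_vecs J q \<times> {..<q}. f x t * (\<Prod>j\<in>J. f j (n j)))"
    unfolding digit_vecs_insert[OF insert.hyps(2)]
    by (subst sum.reindex[OF inj_on_digit_vecs_upd[OF insert.hyps(2)]]) (simp only: o_def case_prod_unfold upd)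
  also have "\<dots> = (\<Sum>t<q. f x t) * (\<Sum>n\<in>digit_vecs J q. \<Prod>j\<in>J. f j (n j))"
    by (simp add: sum.cartesian_product[symmetric] sum_product sum.swap[of _ "{..<q}"])
  finally show ?case using insert by simp
qed

lemma i_power_mod4: "\<i> ^ m = \<i> ^ (m mod 4)"
proof -
  have "\<i> ^ m = (\<i> ^ 4) ^ (m div 4) * \<i> ^ (m mod 4)"
  proof -
    have "\<i> ^ m = \<i> ^ (4 * (m div 4) + m mod 4)" by simp
    then show ?thesis by (simp only: power_add power_mult)
  qed
  also have "(\<i> :: complex) ^ 4 = 1" by (simp add: numeral_eq_Suc)
  finally show ?thesis by simp
qed

lemma sum_i_power_mult: "(\<Sum>t<4. \<i> ^ (m * t)) = (if 4 dvd m then 4 else 0)"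
proof -
  have "{..<4::nat} = {0, 1, 2, 3}" by auto
  then have "(\<Sum>t<4. \<i> ^ (m * t)) = 1 + w + w\<^sup>2 + w ^ 3" if "w = \<i> ^ (m mod 4)" for w
    by (simp add: that power_mult i_power_mod4[of m, symmetric])
  moreover have "m mod 4 = 0 \<or> m mod 4 = 1 \<or> m mod 4 = 2 \<or> m mod 4 = 3" by linarith
  ultimately show ?thesis
    by (elim disjE) (simp_all add: dvd_eq_mod_eq_0 power2_eq_square power3_eq_cube)
qed

lemma cnj_i_power: "cnj (\<i> ^ m) = \<i> ^ (3 * m)"
  by (simp add: power_mult power3_eq_cube)

lemma sum_of_bool_mult:
  fixes n :: "'a \<Rightarrow> nat"
  assumes "finite J" "\<forall>j. j \<notin> J \<longrightarrow> n j = 0"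
  shows "(\<Sum>j\<in>J. of_bool (j = x) * n j) = n x"
proof -
  have "(\<Sum>j\<in>J. of_bool (j = x) * n j) = (\<Sum>j\<in>J. if j = x then n j else 0)"
    by (rule sum.cong) auto
  then show ?thesis using assms by (simp add: sum.delta)
qed

lemma prod_if_const:
  assumes "finite J"
  shows "(\<Prod>j\<in>J. if P j then c else 0) = (if \<forall>j\<in>J. P j then c ^ card J else (0 :: 'a :: comm_semiring_1))"
proof (cases "\<forall>j\<in>J. P j")
  case False
  then obtain j where "j \<in> J" "\<not> P j" by blast
  then have "(\<Prod>j\<in>J. if P j then c else 0) = 0" by (intro prod_zero[OF assms]) auto
  with False show ?thesis by (simp only: if_False)
qed simp

lemma four_dvd_add_three_mult_iff:
  assumes "x \<le> 2" "y \<le> 2"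
  shows "4 dvd (x + 3 * y :: nat) \<longleftrightarrow> x = y"
proof -
  have "x = 0 \<or> x = 1 \<or> x = 2" "y = 0 \<or> y = 1 \<or> y = 2" using assms by auto
  then show ?thesis by (elim disjE) simp_all
qed

lemma pair_eq_iff_counts_eq_off:
  "(\<forall>j. j \<noteq> x \<longrightarrow> of_bool (j = a) + of_bool (j = b) = of_bool (j = c) + (of_bool (j = e) :: nat))
   \<longleftrightarrow> (a = c \<and> b = e) \<or> (a = e \<and> b = c)" (is "(\<forall>j. ?count j) \<longleftrightarrow> _")
proof
  assume "\<forall>j. ?count j"
  then have "?count a" "?count b" "?count c" "?count e" by blast+
  then show "(a = c \<and> b = e) \<or> (a = e \<and> b = c)"
    by (cases "a = c"; cases "a = e"; cases "b = c"; cases "b = e"; cases "a = b"; cases "c = e"; simp)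
qed auto

lemma sum_vec_set_i_powers:
  assumes "a \<in> {1..d}" "b \<in> {1..d}" "c \<in> {1..d}" "e \<in> {1..d}"
  shows "(\<Sum>n\<in>vec_set d. \<i> ^ n a * \<i> ^ n b * cnj (\<i> ^ n c) * cnj (\<i> ^ n e))
       = (if (a = c \<and> b = e) \<or> (a = e \<and> b = c) then 4 ^ (d - 1) else 0)"
proof -
  define count where "count x y j = of_bool (j = x) + (of_bool (j = y) :: nat)" for x y j :: nat
  define m where "m j = count a b j + 3 * count c e j" for j
  have summand: "\<i> ^ n a * \<i> ^ n b * cnj (\<i> ^ n c) * cnj (\<i> ^ n e) = (\<Prod>j\<in>{2..d}. \<i> ^ (m j * n j))"
    if "n \<in> vec_set d" for n
  proof -
    have supp: "\<forall>j. j \<notin> {2..d} \<longrightarrow> n j = 0" using that by (simp add: vec_set_def)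
    have "m j * n j = of_bool (j = a) * n j + of_bool (j = b) * n j
        + 3 * (of_bool (j = c) * n j + of_bool (j = e) * n j)" for j
      by (simp add: m_def count_def algebra_simps)
    then have "(\<Sum>j\<in>{2..d}. m j * n j) = n a + n b + 3 * n c + 3 * n e"
      by (simp only: sum.distrib sum_distrib_left[symmetric] sum_of_bool_mult[OF finite_atLeastAtMost supp]
          add_mult_distrib2 add.assoc)
    then show ?thesis
      by (simp only: power_sum[symmetric] cnj_i_power power_add mult.assoc)
  qed
  have dvd_iff_count: "(\<forall>j\<in>{2..d}. 4 dvd m j) \<longleftrightarrow> (\<forall>j. j \<noteq> 1 \<longrightarrow> count a b j = count c e j)"
  proof -
    have "4 dvd m j \<longleftrightarrow> count a b j = count c e j" for j
      unfolding m_def by (rule four_dvd_add_three_mult_iff) (simp_all add: count_def)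
    moreover have "count a b j = count c e j" if "j \<notin> {1..d}" for j
      using assms that by (auto simp: count_def)
    moreover have "j \<in> {2..d} \<longleftrightarrow> j \<in> {1..d} \<and> j \<noteq> 1" for j :: nat
      by auto
    ultimately show ?thesis by blast
  qed
  have "(\<Sum>n\<in>vec_set d. \<i> ^ n a * \<i> ^ n b * cnj (\<i> ^ n c) * cnj (\<i> ^ n e))
      = (\<Sum>n\<in>digit_vecs {2..d} 4. \<Prod>j\<in>{2..d}. \<i> ^ (m j * n j))"
    using summand by (simp add: vec_set_eq_digit_vecs)
  also have "\<dots> = (\<Prod>j\<in>{2..d}. if 4 dvd m j then 4 else 0)"
    by (subst sum_digit_vecs_prod) (simp_all add: sum_i_power_mult)
  also have "\<dots> = (if \<forall>j\<in>{2..d}. 4 dvd m j then 4 ^ (d - 1) else 0)"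
    by (simp add: prod_if_const)
  finally show ?thesis
    by (simp only: dvd_iff_count count_def pair_eq_iff_counts_eq_off)
qed

definition kraus_kernel :: "'m set \<Rightarrow> ('m \<Rightarrow> nat \<Rightarrow> nat \<Rightarrow> complex) \<Rightarrow> nat \<Rightarrow> nat \<Rightarrow> nat \<Rightarrow> nat \<Rightarrow> complex" where
  "kraus_kernel M E k l k' j = (\<Sum>m\<in>M. E m k l * cnj (E m k' j))"

lemma sum_kraus_conj_eq_kernel:
  "(\<Sum>m\<in>M. mmult d (mmult d (E m) \<rho>) (adj (E m)) k k')
     = (\<Sum>l\<in>{1..d}. \<Sum>j\<in>{1..d}. \<rho> l j * kraus_kernel M E k l k' j)"
proof -
  have "(\<Sum>m\<in>M. mmult d (mmult d (E m) \<rho>) (adj (E m)) k k')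
      = (\<Sum>m\<in>M. \<Sum>j\<in>{1..d}. \<Sum>l\<in>{1..d}. \<rho> l j * (E m k l * cnj (E m k' j)))"
    by (simp add: mmult_def adj_def sum_distrib_left sum_distrib_right mult_ac)
  also have "\<dots> = (\<Sum>j\<in>{1..d}. \<Sum>l\<in>{1..d}. \<Sum>m\<in>M. \<rho> l j * (E m k l * cnj (E m k' j)))"
    by (simp add: sum.swap[of _ M] sum.swap[of _ M "{1..d}"])
  also have "\<dots> = (\<Sum>l\<in>{1..d}. \<Sum>j\<in>{1..d}. \<rho> l j * kraus_kernel M E k l k' j)"
    by (subst sum.swap) (simp add: kraus_kernel_def sum_distrib_left)
  finally show ?thesis .
qed

lemma sum_adj_mult_eq_kernel:
  "(\<Sum>m\<in>M. mmult d (adj (E m)) (E m) k k') = (\<Sum>j\<in>{1..d}. cnj (kraus_kernel M E j k j k'))"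
  by (simp add: mmult_def adj_def kraus_kernel_def sum.swap[of _ M])

lemma of_real_inverse_sqrt_mult_cnj:
  "0 \<le> x \<Longrightarrow> complex_of_real (1 / sqrt x) * cnj (complex_of_real (1 / sqrt x)) = complex_of_real (1 / x)"
  by (simp flip: of_real_mult)

lemma sum_sum_pair_delta:
  assumes "finite A" "finite B" "x \<in> A" "y \<in> B"
  shows "(\<Sum>a\<in>A. \<Sum>b\<in>B. of_bool (a = x \<and> b = y) * f a b) = (f x y :: 'c :: semiring_1)"
proof -
  have "(\<Sum>a\<in>A. \<Sum>b\<in>B. of_bool (a = x \<and> b = y) * f a b) = (\<Sum>a\<in>A. if a = x then \<Sum>b\<in>B. if b = y then f a b else 0 else 0)"
    by (auto intro!: sum.cong)
  then show ?thesis using assms by simp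
qed

lemma sym_state_inner:
  assumes "l \<in> {1..d}" "k \<in> {1..d}"
  shows "(\<Sum>a\<in>{1..d}. \<Sum>b\<in>{1..d}. sym_state l k a b * cnj (sym_state l' k' a b))
       = of_bool ((l = l' \<and> k = k') \<or> (l = k' \<and> k = l'))"
proof (cases "l = k")
  case True
  then have "sym_state l k a b = of_bool (a = l \<and> b = l)" for a b
    by (simp add: sym_state_def)
  then have "(\<Sum>a\<in>{1..d}. \<Sum>b\<in>{1..d}. sym_state l k a b * cnj (sym_state l' k' a b))
      = (\<Sum>a\<in>{1..d}. \<Sum>b\<in>{1..d}. of_bool (a = l \<and> b = l) * cnj (sym_state l' k' a b))"
    by simp
  also have "\<dots> = cnj (sym_state l' k' l l)"
    using assms by (intro sum_sum_pair_delta) auto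
  finally show ?thesis using True by (auto simp: sym_state_def)
next
  case False
  let ?s = "complex_of_real (1 / sqrt 2)"
  have "(\<Sum>a\<in>{1..d}. \<Sum>b\<in>{1..d}. sym_state l k a b * cnj (sym_state l' k' a b))
      = (\<Sum>a\<in>{1..d}. \<Sum>b\<in>{1..d}. of_bool (a = l \<and> b = k) * (?s * cnj (sym_state l' k' a b)))
      + (\<Sum>a\<in>{1..d}. \<Sum>b\<in>{1..d}. of_bool (a = k \<and> b = l) * (?s * cnj (sym_state l' k' a b)))"
  proof -
    have "sym_state l k a b = (of_bool (a = l \<and> b = k) + of_bool (a = k \<and> b = l)) * ?s" for a b
      using False by (auto simp: sym_state_def)
    then show ?thesis by (simp only: mult.assoc distrib_right sum.distrib)
  qed
  also have "\<dots> = ?s * cnj (sym_state l' k' l k) + ?s * cnj (sym_state l' k' k l)"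
    using assms by (intro arg_cong2[where f = "(+)"] sum_sum_pair_delta) auto
  also have "\<dots> = of_bool ((l = l' \<and> k = k') \<or> (l = k' \<and> k = l'))"
  proof -
    have "?s * ?s = 1 / 2"
      by (simp flip: of_real_mult)
    then show ?thesis using False by (auto simp: sym_state_def)
  qed
  finally show ?thesis .
qed

text \<open>Tracing out the clone system: the complementary channel has the Kraus operators
  \<open>(\<langle>a| \<otimes> \<langle>b| \<otimes> I) V\<close>.\<close>
definition cloner_kraus :: "nat \<Rightarrow> nat \<times> nat \<Rightarrow> nat \<Rightarrow> nat \<Rightarrow> complex" where
  "cloner_kraus d ab k l = cloner_iso d (fst ab, snd ab, k) l"

lemma compl_S2_eq_sum_kraus:
  "compl_S2 d \<rho> k k'
     = (\<Sum>ab\<in>{1..d} \<times> {1..d}. mmult d (mmult d (cloner_kraus d ab) \<rho>) (adj (cloner_kraus d ab)) k k')"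
proof -
  have "mmult d (mmult d (cloner_kraus d (a, b)) \<rho>) (adj (cloner_kraus d (a, b))) k k'
      = (\<Sum>l\<in>{1..d}. \<Sum>l'\<in>{1..d}. cloner_iso d (a, b, k) l * \<rho> l l' * cnj (cloner_iso d (a, b, k') l'))"
    for a b
    by (simp add: mmult_def adj_def cloner_kraus_def sum_distrib_right) (rule sum.swap)
  moreover have "compl_S2 d \<rho> k k' = (\<Sum>(a, b)\<in>{1..d} \<times> {1..d}.
      \<Sum>l\<in>{1..d}. \<Sum>l'\<in>{1..d}. cloner_iso d (a, b, k) l * \<rho> l l' * cnj (cloner_iso d (a, b, k') l'))"
    unfolding compl_S2_def by (rule sum.cartesian_product)
  ultimately show ?thesis by (auto intro: sum.cong)
qed

lemma kraus_kernel_cloner: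
  assumes "k \<in> {1..d}" "l \<in> {1..d}"
  shows "kraus_kernel ({1..d} \<times> {1..d}) (cloner_kraus d) k l k' j
       = (if (l = j \<and> k = k') \<or> (l = k' \<and> k = j) then (1 + of_bool (l = k)) / (of_nat d + 1) else 0)"
proof -
  define w where "w l k = sqrt ((1 + of_bool (l = k)) / (real d + 1))" for l k :: nat
  have "kraus_kernel ({1..d} \<times> {1..d}) (cloner_kraus d) k l k' j
      = (\<Sum>a\<in>{1..d}. \<Sum>b\<in>{1..d}. cloner_iso d (a, b, k) l * cnj (cloner_iso d (a, b, k') j))"
    by (simp add: kraus_kernel_def cloner_kraus_def sum.cartesian_product split_def)
  also have "\<dots> = complex_of_real (w l k * w j k')
      * (\<Sum>a\<in>{1..d}. \<Sum>b\<in>{1..d}. sym_state l k a b * cnj (sym_state j k' a b))"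
    by (simp add: cloner_iso_def w_def sum_distrib_left mult_ac)
  also have "\<dots> = complex_of_real (w l k * w j k') * of_bool ((l = j \<and> k = k') \<or> (l = k' \<and> k = j))"
    using assms by (simp only: sym_state_inner)
  also have "\<dots> = (if (l = j \<and> k = k') \<or> (l = k' \<and> k = j) then (1 + of_bool (l = k)) / (of_nat d + 1) else 0)"
  proof (cases "(l = j \<and> k = k') \<or> (l = k' \<and> k = j)")
    case True
    then have "w j k' = w l k" by (auto simp: w_def)
    then have "w l k * w j k' = (1 + of_bool (l = k)) / (real d + 1)"
      by (simp add: w_def)
    then have "complex_of_real (w l k * w j k') = (1 + of_bool (l = k)) / (of_nat d + 1)"
      by simp
    with True show ?thesis by simp
  next
    case False
    then show ?thesis by (simp only: of_bool_eq if_False mult_zero_right)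
  qed
  finally show ?thesis .
qed

lemma kraus_kernel_diag:
  assumes "k \<in> {1..d}"
  shows "kraus_kernel {1..d} (kraus_diag d) k l k' j = of_bool (l = k \<and> k' = k \<and> j = k) / (of_nat d + 1)"
proof -
  let ?c = "complex_of_real (1 / sqrt (real d + 1))"
  have "kraus_diag d m k l * cnj (kraus_diag d m k' j)
      = (if m = k then of_bool (l = k \<and> k' = k \<and> j = k) * (?c * cnj ?c) else 0)" for m
    by (auto simp: kraus_diag_def)
  then have "kraus_kernel {1..d} (kraus_diag d) k l k' j = of_bool (l = k \<and> k' = k \<and> j = k) * (?c * cnj ?c)"
    using assms by (simp add: kraus_kernel_def)
  moreover have "?c * cnj ?c = 1 / (of_nat d + 1)"
    by (subst of_real_inverse_sqrt_mult_cnj) simp_all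
  ultimately show ?thesis by simp
qed

lemma kraus_vec_apply:
  assumes "b \<in> {1..d}"
  shows "kraus_vec d n a b = complex_of_real (1 / sqrt (4 ^ (d - 1) * (real d + 1))) * \<i> ^ n a * \<i> ^ n b"
proof -
  have sign: "(- \<i>) ^ m * (- 1) ^ m = \<i> ^ m" for m
    by (simp flip: power_mult_distrib)
  have "kraus_vec d n a b
      = (\<Sum>j\<in>{1..d}. if j = b then complex_of_real (1 / sqrt (4 ^ (d - 1) * (real d + 1))) * \<i> ^ n a
                                   * (cnj (\<i> ^ n b) * (-1) ^ n b) else 0)"
    unfolding kraus_vec_def mmult_def psi_def sigma_z_def by (rule sum.cong) auto
  then show ?thesis using assms by (simp add: sign)
qed

lemma kraus_kernel_vec:
  assumes "k \<in> {1..d}" "l \<in> {1..d}" "k' \<in> {1..d}" "j \<in> {1..d}"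
  shows "kraus_kernel (vec_set d) (kraus_vec d) k l k' j
       = of_bool ((l = j \<and> k = k') \<or> (l = k' \<and> k = j)) / (of_nat d + 1)"
proof -
  let ?c = "complex_of_real (1 / sqrt (4 ^ (d - 1) * (real d + 1)))"
  have "kraus_vec d n k l * cnj (kraus_vec d n k' j)
      = ?c * cnj ?c * (\<i> ^ n k * \<i> ^ n l * cnj (\<i> ^ n k') * cnj (\<i> ^ n j))" for n
    using assms by (simp only: kraus_vec_apply complex_cnj_mult mult_ac)
  then have "kraus_kernel (vec_set d) (kraus_vec d) k l k' j
      = ?c * cnj ?c * (\<Sum>n\<in>vec_set d. \<i> ^ n k * \<i> ^ n l * cnj (\<i> ^ n k') * cnj (\<i> ^ n j))"
    by (simp only: kraus_kernel_def sum_distrib_left)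
  also have "\<dots> = ?c * cnj ?c * (if (k = k' \<and> l = j) \<or> (k = j \<and> l = k') then 4 ^ (d - 1) else 0)"
    using assms by (simp only: sum_vec_set_i_powers)
  also have "\<dots> = of_bool ((l = j \<and> k = k') \<or> (l = k' \<and> k = j)) / (of_nat d + 1)"
  proof -
    have "?c * cnj ?c * 4 ^ (d - 1) = 1 / (4 ^ (d - 1) * (of_nat d + 1)) * 4 ^ (d - 1)"
      by (subst of_real_inverse_sqrt_mult_cnj) simp_all
    then show ?thesis by auto
  qed
  finally show ?thesis .
qed

lemma kraus_kernel_diag_add_vec:
  assumes "k \<in> {1..d}" "l \<in> {1..d}" "k' \<in> {1..d}" "j \<in> {1..d}"
  shows "kraus_kernel {1..d} (kraus_diag d) k l k' j + kraus_kernel (vec_set d) (kraus_vec d) k l k' j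
       = kraus_kernel ({1..d} \<times> {1..d}) (cloner_kraus d) k l k' j"
  unfolding kraus_kernel_diag[OF assms(1)] kraus_kernel_vec[OF assms] kraus_kernel_cloner[OF assms(1,2)]
  by (auto simp: add_divide_distrib)

lemma cloner_kraus_complete:
  assumes "k \<in> {1..d}" "k' \<in> {1..d}"
  shows "(\<Sum>j\<in>{1..d}. cnj (kraus_kernel ({1..d} \<times> {1..d}) (cloner_kraus d) j k j k')) = idm k k'"
proof -
  have entry: "cnj (kraus_kernel ({1..d} \<times> {1..d}) (cloner_kraus d) j k j k')
      = of_bool (k = k') * ((1 + of_bool (k = j)) / (of_nat d + 1))" if "j \<in> {1..d}" for j
    unfolding kraus_kernel_cloner[OF that assms(1)] by auto
  have nonzero: "(of_nat d + 1 :: complex) \<noteq> 0"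
    by (metis of_nat_Suc of_nat_neq_0 add.commute)
  have "(\<Sum>j\<in>{1..d}. cnj (kraus_kernel ({1..d} \<times> {1..d}) (cloner_kraus d) j k j k'))
      = of_bool (k = k') * (\<Sum>j\<in>{1..d}. (1 + of_bool (k = j)) / (of_nat d + 1))"
    by (simp only: sum.cong[OF refl entry] sum_distrib_left)
  also have "(\<Sum>j\<in>{1..d}. (1 + of_bool (k = j)) / (of_nat d + 1)) = (1 :: complex)"
    using assms nonzero by (simp add: sum_divide_distrib[symmetric] sum.distrib add_divide_distrib[symmetric])
  finally show ?thesis by (simp add: idm_def)
qed

theorem lemma2:
  fixes d :: nat
  assumes "d \<ge> 2"
  shows "(\<forall>\<rho>. \<forall>k\<in>{1..d}. \<forall>k'\<in>{1..d}.
            compl_S2 d \<rho> k k' =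
              (\<Sum>j\<in>{1..d}. mmult d (mmult d (kraus_diag d j) \<rho>) (adj (kraus_diag d j)) k k')
            + (\<Sum>n\<in>vec_set d. mmult d (mmult d (kraus_vec d n) \<rho>) (adj (kraus_vec d n)) k k'))
       \<and> (\<forall>k\<in>{1..d}. \<forall>k'\<in>{1..d}.
            (\<Sum>j\<in>{1..d}. mmult d (adj (kraus_diag d j)) (kraus_diag d j) k k')
            + (\<Sum>n\<in>vec_set d. mmult d (adj (kraus_vec d n)) (kraus_vec d n) k k')
            = idm k k')"
proof (intro conjI allI ballI)
  fix \<rho> k k' assume k: "k \<in> {1..d}" "k' \<in> {1..d}"
  have "compl_S2 d \<rho> k k'
      = (\<Sum>l\<in>{1..d}. \<Sum>j\<in>{1..d}. \<rho> l j * kraus_kernel ({1..d} \<times> {1..d}) (cloner_kraus d) k l k' j)"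
    by (simp only: compl_S2_eq_sum_kraus sum_kraus_conj_eq_kernel)
  also have "\<dots> = (\<Sum>l\<in>{1..d}. \<Sum>j\<in>{1..d}. \<rho> l j * kraus_kernel {1..d} (kraus_diag d) k l k' j
                                       + \<rho> l j * kraus_kernel (vec_set d) (kraus_vec d) k l k' j)"
    by (intro sum.cong refl) (metis k kraus_kernel_diag_add_vec distrib_left)
  finally show "compl_S2 d \<rho> k k' =
          (\<Sum>j\<in>{1..d}. mmult d (mmult d (kraus_diag d j) \<rho>) (adj (kraus_diag d j)) k k')
        + (\<Sum>n\<in>vec_set d. mmult d (mmult d (kraus_vec d n) \<rho>) (adj (kraus_vec d n)) k k')"
    by (simp only: sum_kraus_conj_eq_kernel sum.distrib)
next
  fix k k' assume k: "k \<in> {1..d}" "k' \<in> {1..d}"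
  have "(\<Sum>j\<in>{1..d}. mmult d (adj (kraus_diag d j)) (kraus_diag d j) k k')
        + (\<Sum>n\<in>vec_set d. mmult d (adj (kraus_vec d n)) (kraus_vec d n) k k')
      = (\<Sum>j\<in>{1..d}. cnj (kraus_kernel {1..d} (kraus_diag d) j k j k'
                             + kraus_kernel (vec_set d) (kraus_vec d) j k j k'))"
    by (simp only: sum_adj_mult_eq_kernel complex_cnj_add sum.distrib)
  also have "\<dots> = (\<Sum>j\<in>{1..d}. cnj (kraus_kernel ({1..d} \<times> {1..d}) (cloner_kraus d) j k j k'))"
    by (intro sum.cong refl) (metis k kraus_kernel_diag_add_vec)
  finally show "(\<Sum>j\<in>{1..d}. mmult d (adj (kraus_diag d j)) (kraus_diag d j) k k')
        + (\<Sum>n\<in>vec_set d. mmult d (adj (kraus_vec d n)) (kraus_vec d n) k k') = idm k k'"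
    using cloner_kraus_complete[OF k] by simp
qed

end
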